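(* $c(7)=5$, $c(8)=6$, and $c(9)=6$.
   Context: For a prime power $q$, $\mathbb{F}_q$ is the finite field with $q$ elements. The Hamming distance on $\mathbb{F}_q^3$ is $d(u,v)=|\{i: u_i\ne v_i\}|$; $B(u)=\{v : d(u,v)\le 1\}$; the extended ball is $E(u)=\bigcup_{\lambda\in\mathbb{F}_q} B(\lambda u)$. A subset $\mathcal{H}\subseteq \mathbb{F}_q^3$ is a short covering of $\mathbb{F}_q^3$ if $\bigcup_{h\in\mathcal{H}} E(h)=\mathbb{F}_q^3$, and $c(q)$ denotes the minimum cardinality of a short covering of $\mathbb{F}_q^3$. *)

theory Defs
  imports "HOL-Analysis.Finite_Cartesian_Product"
begin

definition hdist :: "'a ^ 3 \<Rightarrow> 'a ^ 3 \<Rightarrow> nat" where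
  "hdist u v = card {i. u $ i \<noteq> v $ i}"

definition hball :: "'a ^ 3 \<Rightarrow> ('a ^ 3) set" where
  "hball u = {v. hdist u v \<le> 1}"

definition ext_ball :: "('a::field) ^ 3 \<Rightarrow> ('a ^ 3) set" where
  "ext_ball u = (\<Union>l\<in>(UNIV :: 'a set). hball (\<chi> i. l * u $ i))"

definition short_covering :: "(('a::field) ^ 3) set \<Rightarrow> bool" where
  "short_covering H \<longleftrightarrow> (\<Union>h\<in>H. ext_ball h) = UNIV"

text \<open>c(q) for the finite field 'a with q = CARD('a) elements.\<close>
definition c_cov :: "('a::{field,finite}) itself \<Rightarrow> nat" where
  "c_cov (_ :: 'a itself) = (LEAST n. \<exists>H :: ('a ^ 3) set. short_covering H \<and> card H = n)"

end

theory Submission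
  imports Defs "HOL-Analysis.Cartesian_Space" "HOL-Algebra.Multiplicative_Group"
begin

text \<open>
  Through its coordinates i and j, a word h with h_i, h_j nonzero covers exactly
  the points with x_j / x_i = h_j / h_i; call these the (i, j)-ratios of H. Covering the
  points (1, s, t) with s, t nonzero forces s \<in> R or t \<in> C or t / s \<in> D for the ratio sets
  R, C, D of the pairs (1, 2), (1, 3), (2, 3). If each of them misses a nonzero element, then
  any two of them together are as large as the multiplicative group, whence
  3 (q - 1) \<le> 2 (|R| + |C| + |D|). Covering the points with a zero coordinate forces, when
  |H| < q - 1, the set V_k of nonzero words of H vanishing at k to be nonempty for each k.
  The words in V_i \<union> V_j have no (i, j)-ratio, and as no nonzero word vanishes everywhere,
  |V_1 \<union> V_2| + |V_1 \<union> V_3| + |V_2 \<union> V_3| \<ge> 5. Hence 3 (q - 1) + 10 \<le> 6 |H|, that is |H| \<ge> 5, 6, 6 for q = 7, 8, 9.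

  For a primitive element g, the point (1, g^i, g^j) is covered by (1, g^a, g^b)
  when i = a, j = b or j - i \<equiv> b - a modulo q - 1, so short coverings of sizes 5, 6, 6 are
  read off from small sets of exponent pairs.
\<close>

lemma hdist_le_1_iff: "hdist u v \<le> 1 \<longleftrightarrow> (\<exists>k. \<forall>i. i \<noteq> k \<longrightarrow> u $ i = v $ i)"
proof -
  have "hdist u v \<le> 1 \<longleftrightarrow> (\<forall>i j. u $ i \<noteq> v $ i \<longrightarrow> u $ j \<noteq> v $ j \<longrightarrow> i = j)"
    by (auto simp: hdist_def card_le_Suc0_iff_eq)
  then show ?thesis by metis
qed

lemma mem_ext_ball_iff: "x \<in> ext_ball h \<longleftrightarrow> (\<exists>l k. \<forall>i. i \<noteq> k \<longrightarrow> l * h $ i = x $ i)"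
  unfolding ext_ball_def hball_def mem_Collect_eq hdist_le_1_iff by auto

lemma ex_third_index: "(i :: 3) \<noteq> j \<Longrightarrow> \<exists>k. \<forall>m. m \<noteq> k \<longrightarrow> m = i \<or> m = j"
  using exhaust_3 by metis

lemma mem_ext_ballI:
  assumes "i \<noteq> j" "l * h $ i = x $ i" "l * h $ j = x $ j"
  shows "x \<in> ext_ball h"
proof -
  obtain k where "\<forall>m. m \<noteq> k \<longrightarrow> m = i \<or> m = j"
    using ex_third_index[OF assms(1)] by blast
  with assms(2,3) show ?thesis
    unfolding mem_ext_ball_iff by metis
qed

lemma mem_ext_ball_if_ratio:
  assumes "i \<noteq> j" "h $ i \<noteq> 0" "x $ i \<noteq> 0" "x $ j / x $ i = h $ j / h $ i"
  shows "x \<in> ext_ball h"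
proof (rule mem_ext_ballI[OF assms(1)])
  show "x $ i / h $ i * h $ i = x $ i" using assms(2) by simp
  show "x $ i / h $ i * h $ j = x $ j" using assms(2-4) by (simp add: field_simps)
qed

lemma mem_ext_ball_if_vanishing:
  assumes "h \<noteq> 0" "h $ k = 0" "x $ k = 0"
  shows "x \<in> ext_ball h"
proof -
  obtain i where "h $ i \<noteq> 0" using assms(1) by (auto simp: vec_eq_iff)
  with assms(2) have "i \<noteq> k" by auto
  then show ?thesis
    by (rule mem_ext_ballI[where l = "x $ i / h $ i"]) (use \<open>h $ i \<noteq> 0\<close> assms(2,3) in simp_all)
qed

lemma short_coveringE:
  assumes "short_covering H"
  obtains h l k where "h \<in> H" "\<And>i. i \<noteq> k \<Longrightarrow> l * h $ i = x $ i"
proof -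
  have "x \<in> (\<Union>h\<in>H. ext_ball h)" using assms unfolding short_covering_def by simp
  then obtain h where "h \<in> H" "x \<in> ext_ball h" by blast
  then show ?thesis using that unfolding mem_ext_ball_iff by blast
qed

section \<open>Ratio sets and the lower bound\<close>

definition ratios :: "('a :: field ^ 3) set \<Rightarrow> 3 \<Rightarrow> 3 \<Rightarrow> 'a set" where
  "ratios H i j = (\<lambda>h. h $ j / h $ i) ` {h \<in> H. h $ i \<noteq> 0 \<and> h $ j \<noteq> 0}"

definition vanishing :: "('a :: zero ^ 3) set \<Rightarrow> 3 \<Rightarrow> ('a ^ 3) set" where
  "vanishing H k = {h \<in> H. h \<noteq> 0 \<and> h $ k = 0}"

lemma ratiosI:
  assumes "h \<in> H" "l * h $ i = a" "l * h $ j = b" "a \<noteq> 0" "b \<noteq> 0"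
  shows "b / a \<in> ratios H i j"
proof -
  have "l \<noteq> 0" "h $ i \<noteq> 0" "h $ j \<noteq> 0" using assms(2-5) by auto
  then have "b / a = h $ j / h $ i" using assms(2,3) by auto
  with assms(1) \<open>h $ i \<noteq> 0\<close> \<open>h $ j \<noteq> 0\<close> show ?thesis
    unfolding ratios_def by blast
qed

lemma short_covering_ratio_or_vanishing:
  fixes H :: "('a :: field ^ 3) set"
  assumes cov: "short_covering H" and "s \<noteq> 0" and ijk: "i \<noteq> j" "i \<noteq> k" "j \<noteq> k"
  shows "s \<in> ratios H i j \<or> vanishing H k \<noteq> {}"
proof -
  define x :: "'a ^ 3" where "x = (\<chi> p. if p = i then 1 else if p = j then s else 0)"
  have x: "x $ i = 1" "x $ j = s" "x $ k = 0"
    using ijk by (simp_all add: x_def)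
  obtain h l m where h: "h \<in> H" and agree: "\<And>p. p \<noteq> m \<Longrightarrow> l * h $ p = x $ p"
    using short_coveringE[OF cov] by metis
  show ?thesis
  proof (cases "m = k")
    case True
    then have "l * h $ i = 1" "l * h $ j = s"
      using agree[of i] agree[of j] x ijk by auto
    then show ?thesis using ratiosI[OF h] \<open>s \<noteq> 0\<close> by fastforce
  next
    case False
    then have "l * h $ k = 0" using agree[of k] x by simp
    moreover have "l * h $ i \<noteq> 0 \<or> l * h $ j \<noteq> 0"
    proof (cases "m = i")
      case True
      then show ?thesis using agree[of j] x ijk \<open>s \<noteq> 0\<close> by auto
    next
      case False
      then show ?thesis using agree[of i] x by auto
    qed
    ultimately have "h \<noteq> 0" "h $ k = 0" by auto
    with h show ?thesis unfolding vanishing_def by blast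
  qed
qed

lemma short_covering_ratio_triangle:
  fixes H :: "('a :: field ^ 3) set"
  assumes cov: "short_covering H" and "s \<noteq> 0" "t \<noteq> 0"
  shows "s \<in> ratios H 1 2 \<or> t \<in> ratios H 1 3 \<or> t / s \<in> ratios H 2 3"
proof -
  obtain h l m where h: "h \<in> H"
    and agree: "\<And>p. p \<noteq> m \<Longrightarrow> l * h $ p = vector [1, s, t] $ p"
    using short_coveringE[OF cov] by metis
  consider "m = 3" | "m = 2" | "m = 1" using exhaust_3 by blast
  then show ?thesis
  proof cases
    case 1
    then have "l * h $ 1 = 1" "l * h $ 2 = s" using agree[of 1] agree[of 2] by simp_all
    then show ?thesis using ratiosI[OF h] \<open>s \<noteq> 0\<close> by fastforce
  next
    case 2
    then have "l * h $ 1 = 1" "l * h $ 3 = t" using agree[of 1] agree[of 3] by simp_all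
    then show ?thesis using ratiosI[OF h] \<open>t \<noteq> 0\<close> by fastforce
  next
    case 3
    then have "l * h $ 2 = s" "l * h $ 3 = t" using agree[of 2] agree[of 3] by simp_all
    then show ?thesis using ratiosI[OF h] \<open>s \<noteq> 0\<close> \<open>t \<noteq> 0\<close> by blast
  qed
qed

lemma card_ratios_add_card_vanishing_le:
  assumes "finite H"
  shows "card (ratios H i j) + card (vanishing H i \<union> vanishing H j) \<le> card H"
proof -
  let ?A = "{h \<in> H. h $ i \<noteq> 0 \<and> h $ j \<noteq> 0}"
  have "card (ratios H i j) \<le> card ?A"
    unfolding ratios_def using assms by (intro card_image_le) simp
  also have "card ?A + card (vanishing H i \<union> vanishing H j)
      = card (?A \<union> (vanishing H i \<union> vanishing H j))"
    using assms by (intro card_Un_disjoint[symmetric]) (auto simp: vanishing_def)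
  also have "\<dots> \<le> card H"
    using assms by (intro card_mono) (auto simp: vanishing_def)
  finally show ?thesis by simp
qed

lemma card_UNIV_minus_zero: "card (UNIV - {0 :: 'a :: {zero, finite}}) = CARD('a) - 1"
  by (simp add: card_Diff_singleton)

lemma nonzero_notinE:
  fixes X :: "'a :: {zero, finite} set"
  assumes "card X < CARD('a) - 1"
  obtains x where "x \<noteq> 0" "x \<notin> X"
proof -
  have "\<not> UNIV - {0} \<subseteq> X"
    using card_mono[of X "UNIV - {0}"] assms card_UNIV_minus_zero[where 'a = 'a] by auto
  then show ?thesis using that by blast
qed

lemma vanishing_nonempty:
  fixes H :: "('a :: {field, finite} ^ 3) set"
  assumes cov: "short_covering H" and small: "card H < CARD('a) - 1"
    and ijk: "i \<noteq> j" "i \<noteq> k" "j \<noteq> k"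
  shows "vanishing H k \<noteq> {}"
proof
  assume "vanishing H k = {}"
  then have "UNIV - {0} \<subseteq> ratios H i j"
    using short_covering_ratio_or_vanishing[OF cov _ ijk] by blast
  then have "CARD('a) - 1 \<le> card (ratios H i j)"
    using card_mono[of "ratios H i j" "UNIV - {0}"] card_UNIV_minus_zero[where 'a = 'a] by simp
  also have "\<dots> \<le> card H"
    using card_ratios_add_card_vanishing_le[of H i j] by simp
  finally show False using small by simp
qed

lemma two_le_card_Un_if_card_Un_le_1:
  assumes "finite A" "finite B" "finite C" "A \<noteq> {}" "B \<noteq> {}" "C \<noteq> {}"
    and "A \<inter> B \<inter> C = {}" "card (A \<union> B) \<le> 1"
  shows "2 \<le> card (A \<union> C)"
proof -
  obtain a b c where "a \<in> A" "b \<in> B" "c \<in> C" using assms(4-6) by blast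
  have "\<forall>x\<in>A \<union> B. \<forall>y\<in>A \<union> B. x = y"
    using assms(1,2,8) card_le_Suc0_iff_eq[of "A \<union> B"] by simp
  with \<open>a \<in> A\<close> \<open>b \<in> B\<close> have "a = b" by simp
  with \<open>a \<in> A\<close> \<open>b \<in> B\<close> have "a \<in> A \<inter> B" by simp
  with assms(7) \<open>c \<in> C\<close> have "a \<noteq> c" by blast
  moreover have "card {a, c} \<le> card (A \<union> C)"
    using assms(1,3) \<open>a \<in> A\<close> \<open>c \<in> C\<close> by (intro card_mono) auto
  ultimately show ?thesis by simp
qed

lemma five_le_card_pairwise_Un:
  assumes "finite A" "finite B" "finite C" "A \<noteq> {}" "B \<noteq> {}" "C \<noteq> {}" "A \<inter> B \<inter> C = {}"
  shows "5 \<le> card (A \<union> B) + card (A \<union> C) + card (B \<union> C)"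
proof -
  have "1 \<le> card (A \<union> B)" "1 \<le> card (A \<union> C)" "1 \<le> card (B \<union> C)"
    using assms(1-6) by (auto simp: Suc_le_eq card_gt_0_iff)
  moreover have "card (A \<union> B) \<le> 1 \<Longrightarrow> 2 \<le> card (A \<union> C) \<and> 2 \<le> card (B \<union> C)"
    using two_le_card_Un_if_card_Un_le_1[of A B C] two_le_card_Un_if_card_Un_le_1[of B A C]
      assms by (auto simp: Un_commute Int_commute)
  moreover have "card (A \<union> C) \<le> 1 \<Longrightarrow> 2 \<le> card (A \<union> B) \<and> 2 \<le> card (B \<union> C)"
    using two_le_card_Un_if_card_Un_le_1[of A C B] two_le_card_Un_if_card_Un_le_1[of C A B]
      assms by (auto simp: Un_commute Int_commute Int_left_commute)
  moreover have "card (B \<union> C) \<le> 1 \<Longrightarrow> 2 \<le> card (A \<union> B) \<and> 2 \<le> card (A \<union> C)"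
    using two_le_card_Un_if_card_Un_le_1[of B C A] two_le_card_Un_if_card_Un_le_1[of C B A]
      assms by (auto simp: Un_commute Int_commute Int_left_commute)
  ultimately show ?thesis by linarith
qed

lemma card_le_card_add_card_if_inj_on_Diff:
  assumes "finite X" "finite Y" "inj_on f (N - X)" "f ` (N - X) \<subseteq> Y"
  shows "card N \<le> card X + card Y"
proof -
  have "card N - card X \<le> card (N - X)" using assms(1) by (rule diff_card_le_card_Diff)
  also have "\<dots> \<le> card Y" using assms(3,4,2) by (rule card_inj_on_le)
  finally show ?thesis by linarith
qed

lemma ratio_sets_card_bound:
  fixes R C D :: "'a :: {field, finite} set"
  assumes cover: "\<And>s t. s \<noteq> 0 \<Longrightarrow> t \<noteq> 0 \<Longrightarrow> s \<in> R \<or> t \<in> C \<or> t / s \<in> D"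
    and small: "card R < CARD('a) - 1" "card C < CARD('a) - 1" "card D < CARD('a) - 1"
  shows "3 * (CARD('a) - 1) \<le> 2 * (card R + card C + card D)"
proof -
  let ?N = "UNIV - {0 :: 'a}"
  obtain s0 where "s0 \<noteq> 0" "s0 \<notin> R" using small(1) by (rule nonzero_notinE)
  obtain t0 where "t0 \<noteq> 0" "t0 \<notin> C" using small(2) by (rule nonzero_notinE)
  obtain w0 where "w0 \<noteq> 0" "w0 \<notin> D" using small(3) by (rule nonzero_notinE)
  have "card ?N \<le> card D + card C"
  proof (rule card_le_card_add_card_if_inj_on_Diff)
    show "inj_on ((*) s0) (?N - D)" using \<open>s0 \<noteq> 0\<close> by (auto simp: inj_on_def)
    show "(*) s0 ` (?N - D) \<subseteq> C"
    proof
      fix t assume "t \<in> (*) s0 ` (?N - D)"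
      then obtain w where "w \<noteq> 0" "w \<notin> D" "t = s0 * w" by blast
      then show "t \<in> C" using cover[of s0 t] \<open>s0 \<noteq> 0\<close> \<open>s0 \<notin> R\<close> by auto
    qed
  qed simp_all
  moreover have "card ?N \<le> card D + card R"
  proof (rule card_le_card_add_card_if_inj_on_Diff)
    show "inj_on ((/) t0) (?N - D)" using \<open>t0 \<noteq> 0\<close> by (auto simp: inj_on_def field_simps)
    show "(/) t0 ` (?N - D) \<subseteq> R"
    proof
      fix s assume "s \<in> (/) t0 ` (?N - D)"
      then obtain w where "w \<noteq> 0" "w \<notin> D" "s = t0 / w" by blast
      then show "s \<in> R" using cover[of s t0] \<open>t0 \<noteq> 0\<close> \<open>t0 \<notin> C\<close> by auto
    qed
  qed simp_all
  moreover have "card ?N \<le> card R + card C"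
  proof (rule card_le_card_add_card_if_inj_on_Diff)
    show "inj_on ((*) w0) (?N - R)" using \<open>w0 \<noteq> 0\<close> by (auto simp: inj_on_def)
    show "(*) w0 ` (?N - R) \<subseteq> C"
    proof
      fix t assume "t \<in> (*) w0 ` (?N - R)"
      then obtain s where "s \<noteq> 0" "s \<notin> R" "t = w0 * s" by blast
      then show "t \<in> C" using cover[of s t] \<open>w0 \<noteq> 0\<close> \<open>w0 \<notin> D\<close> by auto
    qed
  qed simp_all
  ultimately show ?thesis unfolding card_UNIV_minus_zero distrib_left by linarith
qed

lemma short_covering_card_lower_bound:
  fixes H :: "('a :: {field, finite} ^ 3) set"
  assumes cov: "short_covering H" and small: "card H < CARD('a) - 1"
  shows "3 * (CARD('a) - 1) + 10 \<le> 6 * card H"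
proof -
  let ?V = "vanishing H"
  have "5 \<le> card (?V 1 \<union> ?V 2) + card (?V 1 \<union> ?V 3) + card (?V 2 \<union> ?V 3)"
  proof (rule five_le_card_pairwise_Un)
    show "?V 1 \<noteq> {}" by (rule vanishing_nonempty[OF cov small, of 2 3]) simp_all
    show "?V 2 \<noteq> {}" by (rule vanishing_nonempty[OF cov small, of 1 3]) simp_all
    show "?V 3 \<noteq> {}" by (rule vanishing_nonempty[OF cov small, of 1 2]) simp_all
    show "?V 1 \<inter> ?V 2 \<inter> ?V 3 = {}"
      by (auto simp: vanishing_def vec_eq_iff forall_3)
  qed simp_all
  moreover have sizes:
    "card (ratios H 1 2) + card (?V 1 \<union> ?V 2) \<le> card H"
    "card (ratios H 1 3) + card (?V 1 \<union> ?V 3) \<le> card H"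
    "card (ratios H 2 3) + card (?V 2 \<union> ?V 3) \<le> card H"
    by (simp_all add: card_ratios_add_card_vanishing_le)
  moreover have
    "3 * (CARD('a) - 1) \<le> 2 * (card (ratios H 1 2) + card (ratios H 1 3) + card (ratios H 2 3))"
  proof (rule ratio_sets_card_bound)
    show "s \<in> ratios H 1 2 \<or> t \<in> ratios H 1 3 \<or> t / s \<in> ratios H 2 3"
      if "s \<noteq> 0" "t \<noteq> 0" for s t
      using short_covering_ratio_triangle[OF cov that] .
  qed (use sizes small in linarith)+
  ultimately show ?thesis unfolding distrib_left by linarith
qed

lemma short_covering_card_ge:
  fixes H :: "('a :: {field, finite} ^ 3) set"
  assumes "short_covering H" "m \<le> CARD('a) - 1" "6 * (m - 1) < 3 * (CARD('a) - 1) + 10"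
  shows "m \<le> card H"
proof (rule ccontr)
  assume "\<not> m \<le> card H"
  then have "card H < CARD('a) - 1" "6 * card H \<le> 6 * (m - 1)" using assms(2) by auto
  then show False using short_covering_card_lower_bound[OF assms(1)] assms(3) by linarith
qed

section \<open>Primitive elements and the upper bound\<close>

lemma power_mod_eq:
  fixes g :: "'a :: monoid_mult"
  assumes "g ^ n = 1"
  shows "g ^ m = g ^ (m mod n)"
proof -
  have "g ^ m = (g ^ n) ^ (m div n) * g ^ (m mod n)"
    by (simp flip: power_mult power_add)
  with assms show ?thesis by simp
qed

lemma finite_field_generator:
  obtains g :: "'a :: {field, finite}"
  where "g ^ (CARD('a) - 1) = 1" "UNIV - {0} = range (power g)"
proof -
  define R :: "'a ring" where "R = \<lparr>carrier = UNIV, mult = (*), one = 1, zero = 0, add = (+)\<rparr>"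
  interpret R: field R
  proof -
    have "\<exists>y. x + y = 0" for x :: 'a by (rule exI[of _ "- x"]) simp
    moreover have "x \<noteq> 0 \<Longrightarrow> \<exists>y. x * y = 1" for x :: 'a by (rule exI[of _ "inverse x"]) simp
    ultimately show "field R"
      unfolding R_def by unfold_locales (auto simp: algebra_simps Units_def)
  qed
  have R_simps: "carrier R = UNIV" "\<zero>\<^bsub>R\<^esub> = 0" "\<one>\<^bsub>R\<^esub> = 1" "order R = CARD('a)"
    by (simp_all add: R_def order_def)
  have R_pow: "x [^]\<^bsub>R\<^esub> i = x ^ i" for x :: 'a and i :: nat
    by (induction i) (simp_all add: R_def mult.commute)
  obtain g :: 'a where "g \<noteq> 0" and gen: "UNIV - {0} = range (power g)"
    using R.finite_field_mult_group_has_gen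
    by (simp add: R_simps R_pow full_SetCompr_eq) blast
  interpret G: group "mult_of R" by (rule R.field_mult_group)
  have "g [^]\<^bsub>mult_of R\<^esub> order (mult_of R) = \<one>\<^bsub>mult_of R\<^esub>"
    using \<open>g \<noteq> 0\<close> by (intro G.pow_order_eq_1) (simp add: R_simps)
  then have "g ^ (CARD('a) - 1) = 1"
    by (simp add: nat_pow_mult_of R.order_mult_of R_simps R_pow)
  with gen show ?thesis using that by blast
qed

lemma finite_field_primitive_element:
  obtains g :: "'a :: {field, finite}" where
    "g ^ (CARD('a) - 1) = 1"
    "\<And>y. y \<noteq> 0 \<Longrightarrow> \<exists>i < CARD('a) - 1. y = g ^ i"
    "inj_on (power g) {..<CARD('a) - 1}"
proof -
  let ?n = "CARD('a) - 1"
  obtain g :: 'a where g_n: "g ^ ?n = 1" and gen: "UNIV - {0} = range (power g)"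
    by (rule finite_field_generator)
  have "(1 :: 'a) \<in> UNIV - {0}" by simp
  then have "0 < ?n"
    using card_UNIV_minus_zero[where 'a = 'a] card_gt_0_iff[of "UNIV - {0 :: 'a}"] by fastforce
  have powers: "power g ` {..<?n} = UNIV - {0}"
  proof
    show "power g ` {..<?n} \<subseteq> UNIV - {0}"
      using gen by auto
    show "UNIV - {0} \<subseteq> power g ` {..<?n}"
    proof
      fix y :: 'a assume "y \<in> UNIV - {0}"
      then obtain i where "y = g ^ i" using gen by auto
      then have "y = g ^ (i mod ?n)" using power_mod_eq[OF g_n, of i] by simp
      then show "y \<in> power g ` {..<?n}" using \<open>0 < ?n\<close> by auto
    qed
  qed
  show ?thesis
  proof
    show "g ^ ?n = 1" by (rule g_n)
    show "\<exists>i < ?n. y = g ^ i" if "y \<noteq> 0" for y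
    proof -
      have "y \<in> power g ` {..<?n}" unfolding powers using that by simp
      then show ?thesis by auto
    qed
    show "inj_on (power g) {..<?n}"
    proof (rule eq_card_imp_inj_on)
      show "card (power g ` {..<?n}) = card {..<?n}"
        unfolding powers by (simp add: card_Diff_singleton)
    qed simp
  qed
qed

definition power_covering :: "'a :: field \<Rightarrow> nat \<Rightarrow> (nat \<times> nat) set \<Rightarrow> ('a ^ 3) set" where
  "power_covering g r P =
     insert (vector [1, g ^ r, 0]) (insert (vector [0, 0, 1]) ((\<lambda>(a, b). vector [1, g ^ a, g ^ b]) ` P))"

lemma short_covering_power_covering:
  fixes g :: "'a :: field"
  assumes g_n: "g ^ n = 1"
    and gen: "\<And>y. y \<noteq> 0 \<Longrightarrow> \<exists>i<n. y = g ^ i"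
    and grid: "\<forall>i\<in>{..<n}. \<forall>j\<in>{..<n}.
      i = r \<or> (\<exists>(a, b)\<in>P. i = a \<or> j = b \<or> (i + b) mod n = (j + a) mod n)"
  shows "short_covering (power_covering g r P)"
proof -
  let ?H = "power_covering g r P"
  have "g \<noteq> 0" using g_n gen[of 1] by (cases "g = 0") (auto simp: power_0_left)
  have "\<exists>h\<in>?H. x \<in> ext_ball h" for x :: "'a ^ 3"
  proof (cases "\<exists>k. x $ k = 0")
    case True
    then obtain k where "x $ k = 0" by blast
    moreover have "vector [0, 0, 1] \<in> ?H" "vector [1, g ^ r, 0] \<in> ?H"
      by (simp_all add: power_covering_def)
    ultimately show ?thesis
      using exhaust_3[of k] mem_ext_ball_if_vanishing[of "vector [0, 0, 1 :: 'a]" k x]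
        mem_ext_ball_if_vanishing[of "vector [1, g ^ r, 0 :: 'a]" k x]
      by (auto simp: vec_eq_iff forall_3)
  next
    case False
    then have nz: "x $ k \<noteq> 0" for k by blast
    obtain i where i: "i < n" "x $ 2 / x $ 1 = g ^ i" using gen nz by (metis divide_eq_0_iff)
    obtain j where j: "j < n" "x $ 3 / x $ 1 = g ^ j" using gen nz by (metis divide_eq_0_iff)
    consider "i = r" | a b where "(a, b) \<in> P" "i = a \<or> j = b \<or> (i + b) mod n = (j + a) mod n"
      using grid i(1) j(1) by blast
    then show ?thesis
    proof cases
      case 1
      then have "x \<in> ext_ball (vector [1, g ^ r, 0])"
        using i(2) nz by (intro mem_ext_ball_if_ratio[of 1 2]) simp_all
      then show ?thesis by (auto simp: power_covering_def)
    next
      case (2 a b)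
      let ?h = "vector [1, g ^ a, g ^ b] :: 'a ^ 3"
      have "?h \<in> ?H" using 2(1) by (auto simp: power_covering_def)
      moreover have "x \<in> ext_ball ?h"
        using 2(2)
      proof (elim disjE)
        assume "i = a"
        then show ?thesis using i(2) nz by (intro mem_ext_ball_if_ratio[of 1 2]) simp_all
      next
        assume "j = b"
        then show ?thesis using j(2) nz by (intro mem_ext_ball_if_ratio[of 1 3]) simp_all
      next
        assume "(i + b) mod n = (j + a) mod n"
        then have "g ^ i * g ^ b = g ^ j * g ^ a"
          by (metis power_add power_mod_eq[OF g_n])
        then have "x $ 3 / x $ 2 = g ^ b / g ^ a"
          using i(2) j(2) nz \<open>g \<noteq> 0\<close> by (simp add: field_simps)
        then show ?thesis using nz \<open>g \<noteq> 0\<close> by (intro mem_ext_ball_if_ratio[of 2 3]) simp_all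
      qed
      ultimately show ?thesis by blast
    qed
  qed
  then show ?thesis unfolding short_covering_def by blast
qed

lemma short_covering_of_card_7:
  assumes "CARD('a) = 7"
  obtains H :: "('a :: {field, finite} ^ 3) set" where "short_covering H" "card H = 5"
proof -
  have n: "CARD('a) - 1 = 6" using assms by simp
  obtain g :: 'a where g_n: "g ^ 6 = 1" and gen: "\<And>y. y \<noteq> 0 \<Longrightarrow> \<exists>i<6. y = g ^ i"
    and inj: "inj_on (power g) {..<6}"
    using finite_field_primitive_element[where 'a = 'a] unfolding n by blast
  have pow_eq_iff: "g ^ a = g ^ b \<longleftrightarrow> a = b" if "a < 6" "b < 6" for a b
    using inj_on_eq_iff[OF inj] that by simp
  let ?H = "power_covering g 0 {(0, 0), (2, 4), (4, 2)}"
  have "\<forall>i\<in>{..<6}. \<forall>j\<in>{..<6}. i = 0 \<or>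
      (\<exists>(a, b)\<in>{(0, 0), (2, 4), (4, 2)}. i = a \<or> j = b \<or> (i + b) mod 6 = (j + a) mod (6 :: nat))"
    by (simp add: lessThan_nat_numeral lessThan_Suc)
  with g_n gen have "short_covering ?H"
    by (rule short_covering_power_covering)
  moreover have "card ?H = 5"
    using pow_eq_iff[of 0 2] pow_eq_iff[of 0 4] pow_eq_iff[of 2 4]
    by (simp add: power_covering_def vec_eq_iff forall_3)
  ultimately show ?thesis by (rule that)
qed

lemma short_covering_of_card_8:
  assumes "CARD('a) = 8"
  obtains H :: "('a :: {field, finite} ^ 3) set" where "short_covering H" "card H = 6"
proof -
  have n: "CARD('a) - 1 = 7" using assms by simp
  obtain g :: 'a where g_n: "g ^ 7 = 1" and gen: "\<And>y. y \<noteq> 0 \<Longrightarrow> \<exists>i<7. y = g ^ i"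
    and inj: "inj_on (power g) {..<7}"
    using finite_field_primitive_element[where 'a = 'a] unfolding n by blast
  have pow_eq_iff: "g ^ a = g ^ b \<longleftrightarrow> a = b" if "a < 7" "b < 7" for a b
    using inj_on_eq_iff[OF inj] that by simp
  let ?H = "power_covering g 4 {(0, 0), (1, 2), (2, 5), (6, 4)}"
  have "\<forall>i\<in>{..<7}. \<forall>j\<in>{..<7}. i = 4 \<or>
      (\<exists>(a, b)\<in>{(0, 0), (1, 2), (2, 5), (6, 4)}. i = a \<or> j = b \<or> (i + b) mod 7 = (j + a) mod (7 :: nat))"
    by (simp add: lessThan_nat_numeral lessThan_Suc)
  with g_n gen have "short_covering ?H"
    by (rule short_covering_power_covering)
  moreover have "card ?H = 6"
    using pow_eq_iff[of 0 1] pow_eq_iff[of 0 2] pow_eq_iff[of 0 4] pow_eq_iff[of 0 6]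
      pow_eq_iff[of 1 2] pow_eq_iff[of 1 4] pow_eq_iff[of 1 6]
      pow_eq_iff[of 2 4] pow_eq_iff[of 2 6] pow_eq_iff[of 4 6]
    by (simp add: power_covering_def vec_eq_iff forall_3)
  ultimately show ?thesis by (rule that)
qed

lemma short_covering_of_card_9:
  assumes "CARD('a) = 9"
  obtains H :: "('a :: {field, finite} ^ 3) set" where "short_covering H" "card H = 6"
proof -
  have n: "CARD('a) - 1 = 8" using assms by simp
  obtain g :: 'a where g_n: "g ^ 8 = 1" and gen: "\<And>y. y \<noteq> 0 \<Longrightarrow> \<exists>i<8. y = g ^ i"
    and inj: "inj_on (power g) {..<8}"
    using finite_field_primitive_element[where 'a = 'a] unfolding n by blast
  have pow_eq_iff: "g ^ a = g ^ b \<longleftrightarrow> a = b" if "a < 8" "b < 8" for a b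
    using inj_on_eq_iff[OF inj] that by simp
  let ?H = "power_covering g 4 {(0, 0), (0, 2), (2, 6), (6, 4)}"
  have "\<forall>i\<in>{..<8}. \<forall>j\<in>{..<8}. i = 4 \<or>
      (\<exists>(a, b)\<in>{(0, 0), (0, 2), (2, 6), (6, 4)}. i = a \<or> j = b \<or> (i + b) mod 8 = (j + a) mod (8 :: nat))"
    by (simp add: lessThan_nat_numeral lessThan_Suc)
  with g_n gen have "short_covering ?H"
    by (rule short_covering_power_covering)
  moreover have "card ?H = 6"
    using pow_eq_iff[of 0 2] pow_eq_iff[of 0 4] pow_eq_iff[of 0 6]
      pow_eq_iff[of 2 4] pow_eq_iff[of 2 6] pow_eq_iff[of 4 6]
    by (simp add: power_covering_def vec_eq_iff forall_3)
  ultimately show ?thesis by (rule that)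
qed

lemma c_cov_eqI:
  fixes H :: "('a :: {field, finite} ^ 3) set"
  assumes "short_covering H" "card H = m"
    and "m \<le> CARD('a) - 1" "6 * (m - 1) < 3 * (CARD('a) - 1) + 10"
  shows "c_cov TYPE('a) = m"
  unfolding c_cov_def using assms short_covering_card_ge[OF _ assms(3,4)]
  by (intro Least_equality) auto

theorem theorem2:
  assumes "CARD('a::{field,finite}) = 7"
      and "CARD('b::{field,finite}) = 8"
      and "CARD('c::{field,finite}) = 9"
  shows "c_cov TYPE('a) = 5 \<and> c_cov TYPE('b) = 6 \<and> c_cov TYPE('c) = 6"
proof (intro conjI)
  obtain H :: "('a ^ 3) set" where "short_covering H" "card H = 5"
    using assms(1) by (rule short_covering_of_card_7)
  then show "c_cov TYPE('a) = 5" by (rule c_cov_eqI) (simp_all add: assms(1))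
next
  obtain H :: "('b ^ 3) set" where "short_covering H" "card H = 6"
    using assms(2) by (rule short_covering_of_card_8)
  then show "c_cov TYPE('b) = 6" by (rule c_cov_eqI) (simp_all add: assms(2))
next
  obtain H :: "('c ^ 3) set" where "short_covering H" "card H = 6"
    using assms(3) by (rule short_covering_of_card_9)
  then show "c_cov TYPE('c) = 6" by (rule c_cov_eqI) (simp_all add: assms(3))
qed

end
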